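(* Let $0<\gamma<1$, $1<\alpha<2$, $\lambda\ge0$, $\rho>0$, $\eta\in\mathbb{R}$, $J=\sqrt{-1}$, $K>0$, $b>0$, $T>0$, and let $U:[0,b]\to[0,\infty)$. Let $M\ge2$, $N\ge1$ be integers, $h=b/M$, $\tau>0$ with $N\tau\le T$, $x_i=ih$. Suppose $\{v_i^n\}\subset\mathbb{C}$, $0\le i\le M$, $0\le n\le N$, satisfies $$\frac{1}{\tau^\gamma}\sum_{k=0}^{n}l_k^{(2)}e^{-J\eta U(x_i)k\tau}v_i^{n-k}-\kappa\frac{1}{h^\alpha}\sum_{j=0}^{M}w_{i,j}^\alpha v_j^n=f_i^n,\qquad 1\le i\le M-1,\ 1\le n\le N,$$ with $v_i^0=\phi_i$ ($1\le i\le M-1$) and $v_0^n=v_M^n=0$ ($0\le n\le N$), where $f_i^n\in\mathbb{C}$ and $\phi_i\in\mathbb{C}$ are given. Then $$\tau\sum_{n=1}^{N}\|v^n\|^2\le\frac{\tau^{1-\gamma}l_0^{(2)}b^\alpha|\Gamma(1-\alpha)|}{\kappa}\|v^0\|^2+\frac{b^{2\alpha}\Gamma^2(1-\alpha)}{4\kappa^2}\,\tau\sum_{n=1}^{N}\|f^n\|^2.$$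
   Context: Notation: $\kappa_\alpha=\frac{1}{2\cos(\alpha\pi/2)}$ and $\kappa=-K\kappa_\alpha>0$. $g_k^\beta=(-1)^k\binom{\beta}{k}$. $l_k^{2,\gamma}$ are defined by $\left((1-\zeta)+\tfrac12(1-\zeta)^2\right)^{\gamma}=\sum_k l_k^{2,\gamma}\zeta^k$. $l_0^{(2)}=l_0^{2,\gamma}-\left(\sum_{l=1}^{2}\frac1l(1-e^{-\lambda\tau})^l\right)^{\gamma}$ and, at grid point $x_i$, $l_k^{(2)}=e^{-(\lambda+\rho U(x_i))k\tau}l_k^{2,\gamma}$ for $k\ge1$. $w_0^\alpha=\frac{\alpha}{2}g_0^\alpha$, $w_k^\alpha=\frac{\alpha}{2}g_k^\alpha+\frac{2-\alpha}{2}g_{k-1}^\alpha$ ($k\ge1$), and $w_{i,j}^\alpha=w^\alpha_{i-j+1}$ if $j<i-1$, $w_0^\alpha+w_2^\alpha$ if $j=i\pm1$, $2w_1^\alpha$ if $j=i$, $w^\alpha_{j-i+1}$ if $j>i+1$. For grid vectors, $\|v^n\|^2=h\sum_{i=1}^{M-1}|v_i^n|^2$. *)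

theory Defs
  imports "HOL-Analysis.Analysis"
begin

definition kappa_alpha :: "real \<Rightarrow> real" where
  "kappa_alpha \<alpha> = 1 / (2 * cos (\<alpha> * pi / 2))"

definition kappa :: "real \<Rightarrow> real \<Rightarrow> real" where
  "kappa K \<alpha> = - K * kappa_alpha \<alpha>"

definition gcoef :: "real \<Rightarrow> nat \<Rightarrow> real" where
  "gcoef \<beta> k = (-1) ^ k * (\<beta> gchoose k)"

definition lcoef :: "real \<Rightarrow> nat \<Rightarrow> real" where
  "lcoef \<gamma> = (THE c. \<exists>r>0. \<forall>z::real. \<bar>z\<bar> < r \<longrightarrow>
      (\<lambda>k. c k * z ^ k) sums (((1 - z) + (1 - z)^2 / 2) powr \<gamma>))"

definition l0_2 :: "real \<Rightarrow> real \<Rightarrow> real \<Rightarrow> real" where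
  "l0_2 \<gamma> lam \<tau> = lcoef \<gamma> 0 -
     (\<Sum>l=1..(2::nat). (1 / real l) * (1 - exp (- lam * \<tau>)) ^ l) powr \<gamma>"

definition lk_2 :: "real \<Rightarrow> real \<Rightarrow> real \<Rightarrow> real \<Rightarrow> real \<Rightarrow> nat \<Rightarrow> real" where
  "lk_2 \<gamma> lam \<rho> \<tau> u k =
     (if k = 0 then l0_2 \<gamma> lam \<tau>
      else exp (- (lam + \<rho> * u) * real k * \<tau>) * lcoef \<gamma> k)"

definition wcoef :: "real \<Rightarrow> nat \<Rightarrow> real" where
  "wcoef \<alpha> k = (if k = 0 then \<alpha> / 2 * gcoef \<alpha> 0
     else \<alpha> / 2 * gcoef \<alpha> k + (2 - \<alpha>) / 2 * gcoef \<alpha> (k - 1))"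

definition wmat :: "real \<Rightarrow> nat \<Rightarrow> nat \<Rightarrow> real" where
  "wmat \<alpha> i j =
     (if j + 1 < i then wcoef \<alpha> (i - j + 1)
      else if j + 1 = i \<or> j = i + 1 then wcoef \<alpha> 0 + wcoef \<alpha> 2
      else if j = i then 2 * wcoef \<alpha> 1
      else wcoef \<alpha> (j - i + 1))"

definition gnorm2 :: "real \<Rightarrow> nat \<Rightarrow> (nat \<Rightarrow> complex) \<Rightarrow> real" where
  "gnorm2 h M v = h * (\<Sum>i=1..M-1. (cmod (v i))^2)"

end

theory Submission
  imports Defs "HOL-Complex_Analysis.Complex_Analysis"
begin

text \<open>Pair the scheme with \<open>v\<^sup>n\<close> and sum over the time levels and interior nodes.
  The matrix \<open>w\<^sub>i\<^sub>j\<close> is symmetric with nonnegative off-diagonal entries and row sums at most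
  \<open>2 gcoef (\<alpha> - 1) (M - 1) \<le> -2 M\<^sup>-\<^sup>\<alpha> / \<bar>Gamma (1 - \<alpha>)\<bar>\<close> (by log-convexity of \<open>Gamma\<close>), so its
  quadratic form is coercive. The time weights \<open>l\<^sub>k e\<^sup>-\<^sup>i\<^sup>\<eta>\<^sup>U\<^sup>k\<^sup>\<tau>\<close> are the Taylor coefficients of
  \<open>G \<zeta> = bdf2 (\<omega> \<zeta>) powr \<gamma> - bdf2 x powr \<gamma>\<close> with \<open>cmod \<omega> \<le> x = exp (-\<lambda> \<tau>)\<close>. As
  \<open>cos \<theta> powr \<gamma> \<le> cos (\<gamma> \<theta>)\<close>, we get \<open>Re (bdf2 w powr \<gamma>) \<ge> bdf2 (cmod w) powr \<gamma>\<close> on the unit disc, so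
  \<open>Re G \<ge> 0\<close> on the unit circle; Cauchy's formula writes the lower-triangular Toeplitz form of the
  coefficients as the mean of \<open>Re (G u) * cmod (\<Sum>m. z\<^sub>m u\<^sup>m)\<^sup>2 \<ge> 0\<close> over the circle. Hence the time part
  is at least \<open>- l\<^sub>0 \<parallel>v\<^sup>0\<parallel>\<^sup>2\<close>, and Young's inequality closes the estimate.\<close>

section \<open>Grunwald-Letnikov coefficients\<close>

lemma gcoef_0 [simp]: "gcoef a 0 = 1"
  by (simp add: gcoef_def)

lemma gcoef_1 [simp]: "gcoef a (Suc 0) = - a"
  by (simp add: gcoef_def)

lemma gcoef_Suc: "gcoef a (Suc k) = gcoef a k * (real k - a) / (real k + 1)"
proof -
  have "(real k + 1) * (a gchoose Suc k) = (a - real k) * (a gchoose k)"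
    using gbinomial_mult_1[of a k] by (simp add: algebra_simps)
  then have "a gchoose Suc k = (a gchoose k) * (a - real k) / (real k + 1)"
    by (simp add: field_simps)
  then show ?thesis
    by (simp add: gcoef_def algebra_simps)
qed

lemma gcoef_2: "gcoef a 2 = a * (a - 1) / 2"
  using gcoef_Suc[of a 1] by (simp add: numeral_2_eq_2 algebra_simps)

lemma sum_gcoef: "(\<Sum>k\<le>n. gcoef a k) = gcoef (a - 1) n"
  by (simp add: gcoef_def gbinomial_sum_lower_neg mult.commute)

lemma gcoef_Gamma:
  assumes "a \<notin> \<nat>"
  shows "gcoef a n * Gamma (- a) = Gamma (real n - a) / fact n"
proof (induction n)
  case 0
  then show ?case by simp
next
  case (Suc n)
  have "real n - a \<notin> \<int>\<^sub>\<le>\<^sub>0"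
  proof
    assume "real n - a \<in> \<int>\<^sub>\<le>\<^sub>0"
    then obtain k where "real n - a = - real k"
      by (elim nonpos_Ints_cases')
    then have "a = real (n + k)"
      by simp
    with assms show False
      by (metis of_nat_in_Nats)
  qed
  then have Gamma_Suc: "Gamma (real (Suc n) - a) = (real n - a) * Gamma (real n - a)"
    using Gamma_plus1[of "real n - a"] by (simp add: algebra_simps)
  have "gcoef a (Suc n) * Gamma (- a) = gcoef a n * Gamma (- a) * (real n - a) / (real n + 1)"
    by (simp add: gcoef_Suc)
  also have "\<dots> = (real n - a) * Gamma (real n - a) / fact (Suc n)"
    by (simp add: Suc field_simps)
  finally show ?case
    unfolding Gamma_Suc .
qed

lemma gcoef_pred_neg:
  assumes "1 < a" "a < 2" "1 \<le> n"
  shows "gcoef (a - 1) n < 0"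
  using assms(3)
proof (induction n rule: dec_induct)
  case base
  then show ?case using assms by (simp add: gcoef_def)
next
  case (step k)
  then have "real k - (a - 1) > 0"
    using assms by linarith
  then show ?case
    using step by (simp add: gcoef_Suc mult_neg_pos divide_neg_pos)
qed

lemma gcoef_pred_mono:
  assumes "1 < a" "a < 2" "1 \<le> m" "m \<le> n"
  shows "gcoef (a - 1) m \<le> gcoef (a - 1) n"
  using assms(4)
proof (induction n rule: dec_induct)
  case base
  then show ?case by simp
next
  case (step k)
  have "(real k - (a - 1)) / (real k + 1) \<le> 1"
    using assms by simp
  moreover have "gcoef (a - 1) k < 0"
    using gcoef_pred_neg[OF assms(1,2), of k] assms step by linarith
  ultimately have "gcoef (a - 1) k \<le> gcoef (a - 1) k * ((real k - (a - 1)) / (real k + 1))"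
    using mult_left_mono_neg[of _ 1 "gcoef (a - 1) k"] by fastforce
  then show ?case
    using step by (simp add: gcoef_Suc)
qed

lemma Gamma_le_powr_mult_Gamma_diff:
  fixes x s :: real
  assumes "1 \<le> s" "s \<le> 2" "s < x"
  shows "Gamma x \<le> x powr s * Gamma (x - s)"
proof -
  define y where "y = x - s"
  have y: "y > 0" "Gamma y > 0"
    using assms by (simp_all add: y_def)
  have Gamma_y1: "Gamma (y + 1) = y * Gamma y"
    using y by (intro Gamma_plus1) (auto elim: nonpos_Ints_cases')
  \<comment> \<open>log-convexity between \<open>y\<close> and \<open>y + 1\<close>, evaluated at \<open>x - 1 = y + (s - 1)\<close>\<close>
  have "(ln \<circ> Gamma) ((1 - (s - 1)) *\<^sub>R y + (s - 1) *\<^sub>R (y + 1))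
        \<le> (1 - (s - 1)) * (ln \<circ> Gamma) y + (s - 1) * (ln \<circ> Gamma) (y + 1)"
    using assms y by (intro convex_onD[OF log_convex_Gamma_real]) auto
  also have "(1 - (s - 1)) *\<^sub>R y + (s - 1) *\<^sub>R (y + 1) = x - 1"
    by (simp add: y_def algebra_simps)
  also have "(1 - (s - 1)) * (ln \<circ> Gamma) y + (s - 1) * (ln \<circ> Gamma) (y + 1)
      = ln (Gamma y * y powr (s - 1))"
    using y unfolding o_def Gamma_y1 by (simp add: ln_mult ln_powr algebra_simps)
  finally have Gamma_x1: "Gamma (x - 1) \<le> Gamma y * y powr (s - 1)"
    using assms y by (simp add: ln_le_cancel_iff)
  have "Gamma x = (x - 1) * Gamma (x - 1)"
    using Gamma_plus1[of "x - 1"] nonpos_Ints_nonpos[of "x - 1"] assms by force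
  also have "\<dots> \<le> x * (Gamma y * y powr (s - 1))"
    using Gamma_x1 assms by (intro mult_mono) auto
  also have "\<dots> \<le> x * (Gamma y * x powr (s - 1))"
    using y assms by (intro mult_left_mono powr_mono2) (auto simp: y_def)
  also have "\<dots> = x powr s * Gamma y"
    using assms by (simp add: powr_diff field_simps)
  finally show ?thesis
    by (simp add: y_def)
qed

lemma gcoef_pred_Gamma_ge:
  assumes "1 < a" "a < 2" "2 \<le> M"
  shows "real M powr (- a) \<le> gcoef (a - 1) (M - 1) * Gamma (1 - a)"
proof -
  have "a - 1 \<notin> \<nat>"
  proof
    assume "a - 1 \<in> \<nat>"
    then obtain n where "a - 1 = real n"
      by (auto elim: Nats_cases)
    with assms have "0 < real n" "real n < 1"
      by auto
    then show False
      by simp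
  qed
  then have "gcoef (a - 1) (M - 1) * Gamma (1 - a) = Gamma (real M - a) / fact (M - 1)"
    using gcoef_Gamma[of "a - 1" "M - 1"] assms by (simp add: of_nat_diff)
  also have "fact (M - 1) = Gamma (real M)"
    using Gamma_fact[of "M - 1", where 'a = real] assms by (simp add: of_nat_diff)
  finally have coef: "gcoef (a - 1) (M - 1) * Gamma (1 - a) = Gamma (real M - a) / Gamma (real M)" .
  have "Gamma (real M) \<le> real M powr a * Gamma (real M - a)"
    using assms by (intro Gamma_le_powr_mult_Gamma_diff) auto
  then have "real M powr (- a) * Gamma (real M) \<le> Gamma (real M - a)"
    using assms by (simp add: powr_minus field_simps)
  moreover have "Gamma (real M) > 0"
    using assms by simp
  ultimately show ?thesis
    unfolding coef by (simp add: le_divide_eq)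
qed

lemma Gamma_neg_of_gt_minus_one:
  fixes x :: real
  assumes "-1 < x" "x < 0"
  shows "Gamma x < 0"
proof -
  have "x \<notin> \<int>\<^sub>\<le>\<^sub>0"
    using assms by (auto elim!: nonpos_Ints_cases)
  then have "x * Gamma x = Gamma (x + 1)"
    by (simp add: Gamma_plus1)
  also have "\<dots> > 0"
    using assms by simp
  finally show ?thesis
    using assms by (simp add: zero_less_mult_iff)
qed

lemma gcoef_nonneg:
  assumes "1 \<le> a" "a \<le> 2" "2 \<le> k"
  shows "gcoef a k \<ge> 0"
  using assms(3)
proof (induction k rule: dec_induct)
  case base
  then show ?case
    using assms by (simp add: gcoef_2)
next
  case (step k)
  then show ?case
    using assms by (simp add: gcoef_Suc)
qed

section \<open>The spatial matrix\<close>

lemma sum_wcoef: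
  assumes "1 \<le> m"
  shows "(\<Sum>k\<le>m. wcoef a k) = a / 2 * gcoef (a - 1) m + (2 - a) / 2 * gcoef (a - 1) (m - 1)"
  using assms
proof (induction m rule: dec_induct)
  case base
  then show ?case
    using sum_gcoef[of a 1] by (simp add: wcoef_def field_simps)
next
  case (step m)
  have "gcoef (a - 1) (Suc m) = gcoef (a - 1) m + gcoef a (Suc m)"
    using sum_gcoef[of a "Suc m"] sum_gcoef[of a m] by simp
  moreover have "gcoef (a - 1) m = gcoef (a - 1) (m - 1) + gcoef a m"
    using sum_gcoef[of a m] sum_gcoef[of a "m - 1"] step(1) by (cases m) auto
  ultimately show ?case
    using step by (simp add: wcoef_def field_simps)
qed

lemma wmat_sym: "wmat a i j = wmat a j i"
  unfolding wmat_def by auto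

lemma wmat_nonneg:
  assumes "1 \<le> a" "a \<le> 2" "i \<noteq> j"
  shows "wmat a i j \<ge> 0"
proof -
  have "wcoef a 0 + wcoef a 2 = a * (a - 1) * (a + 2) / 4"
    by (simp add: wcoef_def gcoef_2 field_simps)
  moreover have "a * (a - 1) * (a + 2) \<ge> 0"
    using assms by (intro mult_nonneg_nonneg) auto
  ultimately have "wcoef a 0 + wcoef a 2 \<ge> 0"
    by linarith
  moreover have "wcoef a k \<ge> 0" if "3 \<le> k" for k
    using gcoef_nonneg[OF assms(1,2), of k] gcoef_nonneg[OF assms(1,2), of "k - 1"] assms that
    by (simp add: wcoef_def)
  ultimately show ?thesis
    using assms unfolding wmat_def by auto
qed

lemma sum_wmat_before_diag: "(\<Sum>j=1..i-1. wmat a i j) = (\<Sum>d=1..i-1. wmat a 0 d)"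
  by (rule sum.reindex_bij_witness[of _ "\<lambda>d. i - d" "\<lambda>j. i - j"]) (auto simp: wmat_def)

lemma sum_wmat_after_diag: "(\<Sum>j=i+1..M-1. wmat a i j) = (\<Sum>d=1..M-i-1. wmat a 0 d)"
  by (rule sum.reindex_bij_witness[of _ "\<lambda>d. d + i" "\<lambda>j. j - i"]) (auto simp: wmat_def)

lemma wmat_band_sum:
  assumes "2 \<le> m"
  shows "(\<Sum>d=1..m-1. wmat a 0 d) + wcoef a 1 = (\<Sum>k\<le>m. wcoef a k)"
  using assms
proof (induction m rule: dec_induct)
  case base
  then show ?case
    by (simp add: wmat_def numeral_2_eq_2 atMost_Suc)
next
  case (step m)
  have "(\<Sum>d=1..Suc m-1. wmat a 0 d) = (\<Sum>d=1..m-1. wmat a 0 d) + wcoef a (Suc m)"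
    using step(1) by (cases m) (auto simp: sum.cl_ivl_Suc wmat_def)
  then show ?case
    using step by simp
qed

lemma wmat_band_sum_le:
  assumes "1 < a" "a < 2" "1 \<le> m"
  shows "(\<Sum>d=1..m-1. wmat a 0 d) + wcoef a 1 \<le> gcoef (a - 1) m"
proof (cases "m = 1")
  case True
  then show ?thesis
    using assms by (simp add: wcoef_def gcoef_def field_simps mult_nonneg_nonpos)
next
  case False
  then have "2 \<le> m"
    using assms by simp
  then have "(\<Sum>d=1..m-1. wmat a 0 d) + wcoef a 1
      = a / 2 * gcoef (a - 1) m + (2 - a) / 2 * gcoef (a - 1) (m - 1)"
    using sum_wcoef[of m a] wmat_band_sum[of m a] by simp
  also have "\<dots> \<le> a / 2 * gcoef (a - 1) m + (2 - a) / 2 * gcoef (a - 1) m"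
    using assms \<open>2 \<le> m\<close> by (intro add_left_mono mult_left_mono gcoef_pred_mono) auto
  finally show ?thesis
    by (simp add: field_simps)
qed

lemma sum_wmat_row_le:
  assumes "1 < a" "a < 2" "1 \<le> i" "i \<le> M - 1"
  shows "(\<Sum>j=1..M-1. wmat a i j) \<le> 2 * gcoef (a - 1) (M - 1)"
proof -
  have "{1..M-1} = insert i ({1..i-1} \<union> {i+1..M-1})" "i \<notin> {1..i-1} \<union> {i+1..M-1}"
    using assms by auto
  then have "(\<Sum>j=1..M-1. wmat a i j)
      = wmat a i i + (\<Sum>j=1..i-1. wmat a i j) + (\<Sum>j=i+1..M-1. wmat a i j)"
    by (simp add: sum.union_disjoint)
  also have "\<dots> = ((\<Sum>d=1..i-1. wmat a 0 d) + wcoef a 1) + ((\<Sum>d=1..(M-i)-1. wmat a 0 d) + wcoef a 1)"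
    unfolding sum_wmat_before_diag sum_wmat_after_diag by (simp add: wmat_def)
  also have "\<dots> \<le> gcoef (a - 1) i + gcoef (a - 1) (M - i)"
    using assms by (intro add_mono wmat_band_sum_le) auto
  also have "\<dots> \<le> 2 * gcoef (a - 1) (M - 1)"
  proof -
    have "gcoef (a - 1) i \<le> gcoef (a - 1) (M - 1)" "gcoef (a - 1) (M - i) \<le> gcoef (a - 1) (M - 1)"
      using assms by (intro gcoef_pred_mono; simp)+
    then show ?thesis
      by simp
  qed
  finally show ?thesis .
qed

lemma Re_quadratic_form_le_row_sums:
  fixes W :: "nat \<Rightarrow> nat \<Rightarrow> real" and v :: "nat \<Rightarrow> complex"
  assumes sym: "\<And>i j. i \<in> I \<Longrightarrow> j \<in> I \<Longrightarrow> W i j = W j i"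
    and off_diag: "\<And>i j. i \<in> I \<Longrightarrow> j \<in> I \<Longrightarrow> i \<noteq> j \<Longrightarrow> W i j \<ge> 0"
  shows "Re (\<Sum>i\<in>I. \<Sum>j\<in>I. of_real (W i j) * v j * cnj (v i))
         \<le> (\<Sum>i\<in>I. (\<Sum>j\<in>I. W i j) * (cmod (v i))^2)"
proof -
  have entry: "W i j * Re (v j * cnj (v i)) \<le> W i j * (((cmod (v i))^2 + (cmod (v j))^2) / 2)"
    if "i \<in> I" "j \<in> I" for i j
  proof (cases "i = j")
    case True
    have "Re (v i * cnj (v i)) = (cmod (v i))^2"
      by (simp add: complex_mult_cnj cmod_def power2_eq_square)
    then show ?thesis
      using True by simp
  next
    case False
    have "Re (v j * cnj (v i)) \<le> cmod (v j) * cmod (v i)"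
      using complex_Re_le_cmod[of "v j * cnj (v i)"] by (simp add: norm_mult)
    also have "\<dots> \<le> ((cmod (v i))^2 + (cmod (v j))^2) / 2"
      using sum_squares_bound[of "cmod (v j)" "cmod (v i)"] by simp
    finally show ?thesis
      using off_diag[OF that False] by (intro mult_left_mono) auto
  qed
  have "Re (\<Sum>i\<in>I. \<Sum>j\<in>I. of_real (W i j) * v j * cnj (v i))
        = (\<Sum>i\<in>I. \<Sum>j\<in>I. W i j * Re (v j * cnj (v i)))"
    by (simp add: Re_sum mult.assoc)
  also have "\<dots> \<le> (\<Sum>i\<in>I. \<Sum>j\<in>I. W i j * (((cmod (v i))^2 + (cmod (v j))^2) / 2))"
    by (intro sum_mono entry)
  also have "\<dots> = (\<Sum>i\<in>I. \<Sum>j\<in>I. W i j * (cmod (v i))^2) / 2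
                  + (\<Sum>i\<in>I. \<Sum>j\<in>I. W i j * (cmod (v j))^2) / 2"
    by (simp add: sum_divide_distrib sum.distrib add_divide_distrib distrib_left)
  also have "(\<Sum>i\<in>I. \<Sum>j\<in>I. W i j * (cmod (v j))^2) = (\<Sum>i\<in>I. \<Sum>j\<in>I. W i j * (cmod (v i))^2)"
    by (subst sum.swap) (intro sum.cong refl, simp add: sym)
  finally show ?thesis
    by (simp add: sum_distrib_right)
qed

lemma Re_wmat_form_le:
  fixes v :: "nat \<Rightarrow> complex"
  assumes "1 < a" "a < 2" "2 \<le> M" "v 0 = 0" "v M = 0"
  shows "Re (\<Sum>i=1..M-1. (\<Sum>j=0..M. of_real (wmat a i j) * v j) * cnj (v i))
         \<le> - (2 * real M powr (- a) / \<bar>Gamma (1 - a)\<bar>) * (\<Sum>i=1..M-1. (cmod (v i))^2)"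
proof -
  have "v j = 0" if "j \<in> {0..M} - {1..M-1}" for j
  proof -
    have "j = 0 \<or> j = M"
      using that by auto
    then show ?thesis
      using assms by auto
  qed
  then have interior: "(\<Sum>j=0..M. of_real (wmat a i j) * v j) = (\<Sum>j=1..M-1. of_real (wmat a i j) * v j)" for i
    by (intro sum.mono_neutral_right) auto
  have Gamma_neg: "Gamma (1 - a) < 0"
    using assms by (intro Gamma_neg_of_gt_minus_one) auto
  have "2 * gcoef (a - 1) (M - 1) \<le> - (2 * real M powr (- a) / \<bar>Gamma (1 - a)\<bar>)"
    using gcoef_pred_Gamma_ge[OF assms(1-3)] Gamma_neg by (simp add: field_simps)
  then have row: "(\<Sum>j=1..M-1. wmat a i j) \<le> - (2 * real M powr (- a) / \<bar>Gamma (1 - a)\<bar>)"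
    if "i \<in> {1..M-1}" for i
    using sum_wmat_row_le[OF assms(1,2), of i M] that by simp
  have "Re (\<Sum>i=1..M-1. (\<Sum>j=0..M. of_real (wmat a i j) * v j) * cnj (v i))
      = Re (\<Sum>i=1..M-1. \<Sum>j=1..M-1. of_real (wmat a i j) * v j * cnj (v i))"
    by (simp add: interior sum_distrib_right)
  also have "\<dots> \<le> (\<Sum>i=1..M-1. (\<Sum>j=1..M-1. wmat a i j) * (cmod (v i))^2)"
    using assms by (intro Re_quadratic_form_le_row_sums wmat_sym wmat_nonneg) auto
  also have "\<dots> \<le> (\<Sum>i=1..M-1. - (2 * real M powr (- a) / \<bar>Gamma (1 - a)\<bar>) * (cmod (v i))^2)"
    by (intro sum_mono mult_right_mono row) auto
  finally show ?thesis
    by (simp add: sum_distrib_left)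
qed

section \<open>The BDF2 symbol and its fractional power\<close>

text \<open>The generating polynomial of the second-order backward difference (BDF2): \<open>lcoef \<gamma>\<close> are the
  Taylor coefficients of its \<open>\<gamma>\<close>-th power, and the sum in \<open>l0_2\<close> is \<open>bdf2 (exp (- \<lambda> \<tau>))\<close>.\<close>

definition bdf2 :: "'a::field \<Rightarrow> 'a" where
  "bdf2 w = (1 - w) + (1 - w)^2 / 2"

lemma bdf2_of_real: "bdf2 (complex_of_real t) = complex_of_real (bdf2 t)"
  by (simp add: bdf2_def)

lemma bdf2_pos: "(t::real) < 1 \<Longrightarrow> 0 < bdf2 t"
  unfolding bdf2_def by (simp add: add_pos_nonneg)

lemma bdf2_nonneg: "(t::real) \<le> 1 \<Longrightarrow> 0 \<le> bdf2 t"
  unfolding bdf2_def by simp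

lemma bdf2_antimono: "0 \<le> s \<Longrightarrow> s \<le> t \<Longrightarrow> t \<le> 1 \<Longrightarrow> bdf2 t \<le> bdf2 (s::real)"
  unfolding bdf2_def by (intro add_mono divide_right_mono power_mono) auto

lemma bdf2_norm_le_Re:
  assumes "cmod w \<le> 1"
  shows "bdf2 (cmod w) \<le> Re (bdf2 w)"
proof -
  define r where "r = cmod w"
  have "Re (bdf2 w) - bdf2 r
      = (r - Re w) * (2 - (r + Re w)) + (r\<^sup>2 - (Re w)\<^sup>2 - (Im w)\<^sup>2) / 2"
    by (simp add: bdf2_def power2_eq_square field_simps)
  also have "r\<^sup>2 - (Re w)\<^sup>2 - (Im w)\<^sup>2 = 0"
    unfolding r_def cmod_def by simp
  finally have "Re (bdf2 w) - bdf2 r = (r - Re w) * (2 - (r + Re w))"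
    by simp
  moreover have "(r - Re w) * (2 - (r + Re w)) \<ge> 0"
    using assms complex_Re_le_cmod[of w] unfolding r_def by (intro mult_nonneg_nonneg) linarith+
  ultimately show ?thesis
    unfolding r_def[symmetric] by linarith
qed

lemma Re_bdf2_pos: "cmod w < 1 \<Longrightarrow> 0 < Re (bdf2 w)"
  using bdf2_norm_le_Re[of w] bdf2_pos[of "cmod w"] by simp

lemma cos_powr_le_cos_mult:
  fixes g \<theta> :: real
  assumes g: "0 \<le> g" "g \<le> 1" and \<theta>: "\<bar>\<theta>\<bar> < pi / 2"
  shows "cos \<theta> powr g \<le> cos (g * \<theta>)"
proof -
  \<comment> \<open>\<open>t \<mapsto> ln (cos (g t)) - g ln (cos t)\<close> has derivative \<open>g (tan t - tan (g t)) \<ge> 0\<close> on \<open>[0, \<pi>/2)\<close>\<close>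
  define f where "f t = ln (cos (g * t)) - g * ln (cos t)" for t
  have g_le: "0 \<le> g * t" "g * t \<le> t" if "0 \<le> t" for t
    using that g by (simp_all add: mult_left_le_one_le)
  have cos_pos: "cos t > 0" "cos (g * t) > 0" if "0 \<le> t" "t < pi / 2" for t
    using that g_le[OF that(1)] by (intro cos_gt_zero_pi; linarith)+
  have "f 0 \<le> f \<bar>\<theta>\<bar>"
  proof (rule deriv_nonneg_imp_mono[of 0 "\<bar>\<theta>\<bar>" f "\<lambda>t. g * (tan t - tan (g * t))"])
    fix t assume "t \<in> {0..\<bar>\<theta>\<bar>}"
    then have t: "0 \<le> t" "t < pi / 2"
      using \<theta> by auto
    show "(f has_real_derivative g * (tan t - tan (g * t))) (at t)"
      unfolding f_def using cos_pos[OF t]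
      by (auto intro!: derivative_eq_intros simp: tan_def field_simps)
    have "tan (g * t) \<le> tan t"
    proof (cases "g * t = t")
      case False
      then show ?thesis
        using g_le[OF t(1)] t by (intro less_imp_le tan_monotone) auto
    qed (simp only: order_refl)
    then show "0 \<le> g * (tan t - tan (g * t))"
      using g by simp
  qed auto
  moreover have "f \<bar>\<theta>\<bar> = f \<theta>"
    by (simp add: f_def abs_if)
  ultimately have "g * ln (cos \<theta>) \<le> ln (cos (g * \<theta>))"
    by (simp add: f_def)
  moreover have "cos \<theta> > 0" "cos (g * \<theta>) > 0"
    using cos_pos[of "\<bar>\<theta>\<bar>"] \<theta> by (simp_all add: abs_if split: if_splits)
  ultimately show ?thesis
    by (simp add: powr_def ln_le_cancel_iff[symmetric] mult.commute)
qed

lemma Re_bdf2_powr_ge: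
  assumes "0 \<le> g" "g \<le> 1" "cmod w < 1"
  shows "bdf2 (cmod w) powr g \<le> Re (bdf2 w powr of_real g)"
proof -
  define P where "P = bdf2 w"
  have Re_P: "Re P > 0"
    using Re_bdf2_pos assms by (simp add: P_def)
  then have "P \<noteq> 0"
    by auto
  define \<theta> where "\<theta> = Im (Ln P)"
  have \<theta>: "\<bar>\<theta>\<bar> < pi / 2"
    using Re_Ln_pos_lt_imp[OF Re_P] by (simp add: \<theta>_def)
  have Re_P_polar: "Re P = exp (Re (Ln P)) * cos \<theta>"
    using exp_Ln[OF \<open>P \<noteq> 0\<close>] Re_exp[of "Ln P"] by (simp add: \<theta>_def)
  have "cos \<theta> > 0"
    using \<theta> by (intro cos_gt_zero_pi) auto
  have "bdf2 (cmod w) powr g \<le> Re P powr g"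
    using assms bdf2_norm_le_Re[of w] bdf2_pos[of "cmod w"] by (intro powr_mono2) (auto simp: P_def)
  also have "Re P powr g = exp (g * Re (Ln P)) * cos \<theta> powr g"
    using \<open>cos \<theta> > 0\<close> by (simp add: Re_P_polar powr_def ln_mult distrib_left exp_add)
  also have "\<dots> \<le> exp (g * Re (Ln P)) * cos (g * \<theta>)"
    using assms \<theta> by (intro mult_left_mono cos_powr_le_cos_mult) auto
  also have "\<dots> = Re (P powr of_real g)"
    using \<open>P \<noteq> 0\<close> by (simp add: powr_def Re_exp \<theta>_def)
  finally show ?thesis
    by (simp add: P_def)
qed

lemma holomorphic_bdf2_powr: "(\<lambda>w::complex. bdf2 w powr of_real g) holomorphic_on ball 0 1"
proof (intro holomorphic_intros)
  show "bdf2 holomorphic_on ball 0 1"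
    unfolding bdf2_def[abs_def] by (intro holomorphic_intros) auto
  show "bdf2 (w::complex) \<notin> \<real>\<^sub>\<le>\<^sub>0" if "w \<in> ball 0 1" for w
    using Re_bdf2_pos[of w] that by (auto simp: complex_nonpos_Reals_iff)
qed

lemma real_powser_sums_zero_imp_zero:
  fixes e :: "nat \<Rightarrow> real"
  assumes r: "r > 0" and sums_zero: "\<And>z. \<bar>z\<bar> < r \<Longrightarrow> (\<lambda>k. e k * z^k) sums 0"
  shows "e k = 0"
proof (induction k rule: less_induct)
  case (less k)
  \<comment> \<open>once the lower coefficients vanish, the tail divided by \<open>z^k\<close> is a power series vanishing off \<open>0\<close>\<close>
  define f where "f z = (if z = 0 then e k else 0)" for z :: real
  have "(\<lambda>i. e (i + k) * z ^ i) sums f z" if "norm z < r" for z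
  proof (cases "z = 0")
    case True
    then show ?thesis
      by (simp add: f_def powser_sums_zero)
  next
    case False
    have "(\<lambda>i. e (i + k) * z ^ (i + k)) sums (0 - (\<Sum>i<k. e i * z ^ i))"
      using sums_split_initial_segment[OF sums_zero[of z], of k] that by simp
    also have "(\<Sum>i<k. e i * z ^ i) = 0"
      using less by simp
    finally have "(\<lambda>i. inverse (z ^ k) * (e (i + k) * z ^ (i + k))) sums (inverse (z^k) * 0)"
      by (intro sums_mult) simp
    then show ?thesis
      using False by (simp add: f_def power_add field_simps)
  qed
  from powser_limit_0[OF r this] have "(f \<longlongrightarrow> e k) (at 0)"
    by simp
  moreover have "(f \<longlongrightarrow> 0) (at 0)"
    by (rule tendsto_eventually) (auto simp: f_def eventually_at_filter)
  ultimately show ?case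
    by (simp add: tendsto_unique[OF at_neq_bot])
qed

lemma lcoef_eqI:
  assumes "r > 0" and c_sums: "\<And>z. \<bar>z\<bar> < r \<Longrightarrow> (\<lambda>k. c k * z ^ k) sums (bdf2 z powr g)"
  shows "lcoef g = c"
  unfolding lcoef_def bdf2_def[symmetric]
proof (rule the_equality)
  show "\<exists>r>0. \<forall>z. \<bar>z\<bar> < r \<longrightarrow> (\<lambda>k. c k * z ^ k) sums (bdf2 z powr g)"
    using assms by blast
next
  fix c' assume "\<exists>r>0. \<forall>z. \<bar>z\<bar> < r \<longrightarrow> (\<lambda>k. c' k * z ^ k) sums (bdf2 z powr g)"
  then obtain r' where "r' > 0" and c'_sums: "\<And>z. \<bar>z\<bar> < r' \<Longrightarrow> (\<lambda>k. c' k * z ^ k) sums (bdf2 z powr g)"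
    by auto
  have "c' k - c k = 0" for k
  proof (rule real_powser_sums_zero_imp_zero[of "min r r'"])
    fix z :: real assume "\<bar>z\<bar> < min r r'"
    then have "(\<lambda>k. c' k * z ^ k - c k * z ^ k) sums (bdf2 z powr g - bdf2 z powr g)"
      by (intro sums_diff c'_sums c_sums) auto
    then show "(\<lambda>k. (c' k - c k) * z ^ k) sums 0"
      by (simp add: algebra_simps)
  qed (use \<open>r > 0\<close> \<open>r' > 0\<close> in simp)
  then show "c' = c"
    by auto
qed

lemma lcoef_sums_bdf2_powr:
  assumes "cmod w < 1"
  shows "(\<lambda>k. of_real (lcoef g k) * w ^ k) sums (bdf2 w powr of_real g)"
proof -
  define c where "c k = (deriv ^^ k) (\<lambda>w::complex. bdf2 w powr of_real g) 0 / fact k" for k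
  have c_sums: "(\<lambda>k. c k * w ^ k) sums (bdf2 w powr of_real g)" if "cmod w < 1" for w
    using holomorphic_power_series[OF holomorphic_bdf2_powr, of w] that by (simp add: c_def)
  have real_sums: "(\<lambda>k. Re (c k) * t ^ k) sums (bdf2 t powr g)" "(\<lambda>k. Im (c k) * t ^ k) sums 0"
    if "\<bar>t\<bar> < 1" for t
  proof -
    have "(\<lambda>k. c k * of_real t ^ k) sums of_real (bdf2 t powr g)"
      using c_sums[of "of_real t"] that bdf2_pos[of t] by (simp add: bdf2_of_real powr_of_real abs_less_iff)
    then show "(\<lambda>k. Re (c k) * t ^ k) sums (bdf2 t powr g)" "(\<lambda>k. Im (c k) * t ^ k) sums 0"
      by (simp_all add: sums_complex_iff flip: of_real_power)
  qed
  have "Im (c k) = 0" for k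
    by (rule real_powser_sums_zero_imp_zero[of 1]) (use real_sums(2) in auto)
  moreover have "lcoef g = (\<lambda>k. Re (c k))"
    using real_sums(1) by (intro lcoef_eqI[of 1]) auto
  ultimately have "c k = of_real (lcoef g k)" for k
    by (simp add: complex_eq_iff)
  then show ?thesis
    using c_sums[OF assms] by simp
qed

section \<open>Toeplitz forms with positive-real symbol\<close>

lemma powser_sums_on_ball_Taylor:
  fixes A :: "nat \<Rightarrow> complex"
  assumes "R > 0" and sums: "\<And>\<zeta>. cmod \<zeta> < R \<Longrightarrow> (\<lambda>k. A k * \<zeta> ^ k) sums G \<zeta>"
  shows "G holomorphic_on ball 0 R" and "A k = (deriv ^^ k) G 0 / fact k"
proof -
  define F where "F = Abs_fps A"
  have radius: "fps_conv_radius F \<ge> ereal R"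
    unfolding F_def fps_conv_radius_def
    by (rule conv_radius_geI_ex') (use sums in \<open>auto simp: sums_iff\<close>)
  then have "ball 0 R \<subseteq> eball 0 (fps_conv_radius F)"
    by (auto intro!: order.strict_trans2[OF _ radius])
  then have "eval_fps F holomorphic_on ball 0 R"
    by (intro holomorphic_intros)
  moreover have eval_F: "eval_fps F \<zeta> = G \<zeta>" if "\<zeta> \<in> ball 0 R" for \<zeta>
    using sums[of \<zeta>] that by (simp add: eval_fps_def F_def sums_iff)
  ultimately show "G holomorphic_on ball 0 R"
    by (rule holomorphic_transform)
  have "\<forall>\<^sub>F \<zeta> in nhds 0. \<zeta> \<in> ball (0::complex) R"
    using assms by (intro eventually_nhds_in_open) auto
  then have "G has_fps_expansion F"
    by (intro has_fps_expansionI, rule eventually_mono) (use sums in \<open>auto simp: F_def\<close>)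
  then show "A k = (deriv ^^ k) G 0 / fact k"
    using fps_nth_fps_expansion[of G F k] by (simp add: F_def)
qed

lemma Re_circlepath_integral_nonneg:
  assumes "(f has_contour_integral (2 * pi * \<i> * I)) (circlepath 0 1)"
    and "\<And>u. cmod u = 1 \<Longrightarrow> Re (u * f u) \<ge> 0"
  shows "Re I \<ge> 0"
proof -
  define e where "e t = exp (2 * of_real pi * \<i> * of_real t)" for t :: real
  have "((\<lambda>t. 2 * pi * \<i> * (e t * f (e t))) has_integral (2 * pi * \<i> * I)) {0..1}"
  proof (rule has_integral_eq[OF _ assms(1)[unfolded has_contour_integral_def]])
    fix t :: real assume "t \<in> {0..1}"
    then have "vector_derivative (circlepath 0 1) (at t within {0..1}) = 2 * pi * \<i> * e t"
      using vector_derivative_circlepath01[of t 0 1] by (simp add: e_def)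
    moreover have "circlepath 0 1 t = e t"
      by (simp add: circlepath e_def)
    ultimately show "f (circlepath 0 1 t) * vector_derivative (circlepath 0 1) (at t within {0..1})
        = 2 * pi * \<i> * (e t * f (e t))"
      by simp
  qed
  then have "((\<lambda>t. e t * f (e t)) has_integral I) {0..1}"
    by (subst (asm) has_integral_mult_right_iff) auto
  from has_integral_linear[OF this bounded_linear_Re]
  have "((\<lambda>t. Re (e t * f (e t))) has_integral Re I) {0..1}"
    by (simp only: o_def)
  then show ?thesis
    by (rule has_integral_nonneg) (intro assms(2), simp add: e_def norm_exp_eq_Re)
qed

lemma cnj_eq_inverse_if_norm_1:
  assumes "cmod u = 1"
  shows "cnj u = inverse u"
proof -
  have "u * cnj u = 1" "u \<noteq> 0"
    using complex_norm_square[of u] assms by auto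
  then show ?thesis
    by (simp add: field_simps)
qed

lemma unit_circle_monomial_eq:
  fixes c u :: complex
  assumes u: "cmod u = 1"
  shows "(if m \<le> n then c / u ^ Suc (n - m) else c * u ^ (m - n - 1))
      = c * u ^ m * cnj u ^ n / u"
proof -
  have "u \<noteq> 0"
    using u by auto
  have "c * u ^ m * cnj u ^ n / u = c * u ^ m / (u ^ n * u)"
    using u by (simp add: cnj_eq_inverse_if_norm_1 power_inverse divide_inverse)
  also have "\<dots> = (if m \<le> n then c / u ^ Suc (n - m) else c * u ^ (m - n - 1))"
  proof (cases "m \<le> n")
    case True
    then have "u ^ n * u = u ^ m * u ^ Suc (n - m)"
      by (simp flip: power_add power_Suc2)
    then show ?thesis
      using True \<open>u \<noteq> 0\<close> by simp
  next
    case False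
    then have "m = Suc n + (m - n - 1)"
      by simp
    then have "u ^ m = u ^ n * u * u ^ (m - n - 1)"
      by (metis power_add power_Suc2)
    then show ?thesis
      using False \<open>u \<noteq> 0\<close> by simp
  qed
  finally show ?thesis ..
qed

lemma has_contour_integral_circlepath_Laurent_monomial:
  assumes "G holomorphic_on ball 0 R" "R > 1"
  shows "((\<lambda>u. G u * u ^ m * cnj u ^ n / u) has_contour_integral
          (2 * pi * \<i> * (if m \<le> n then (deriv ^^ (n - m)) G 0 / fact (n - m) else 0))) (circlepath 0 1)"
proof -
  have sub: "cball 0 1 \<subseteq> ball (0::complex) R"
    using assms by auto
  have on_circle: "(if m \<le> n then G u / u ^ Suc (n - m) else G u * u ^ (m - n - 1))
      = G u * u ^ m * cnj u ^ n / u"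
    if "u \<in> path_image (circlepath 0 1)" for u
    using that by (intro unit_circle_monomial_eq) (simp add: path_image_circlepath)
  have "((\<lambda>u. if m \<le> n then G u / u ^ Suc (n - m) else G u * u ^ (m - n - 1)) has_contour_integral
          (2 * pi * \<i> * (if m \<le> n then (deriv ^^ (n - m)) G 0 / fact (n - m) else 0))) (circlepath 0 1)"
  proof (cases "m \<le> n")
    case True
    have "continuous_on (cball 0 1) G" "G holomorphic_on ball 0 1"
      using assms sub by (auto intro: holomorphic_on_imp_continuous_on holomorphic_on_subset)
    from Cauchy_has_contour_integral_higher_derivative_circlepath[OF this, of 0 "n - m"]
    show ?thesis
      using True by simp
  next
    case False
    have "((\<lambda>u. G u * u ^ (m - n - 1)) has_contour_integral 0) (circlepath 0 1)"
      using assms sub by (intro Cauchy_theorem_convex_simple[of _ "ball 0 R"] holomorphic_intros)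
                         (auto simp: path_image_circlepath)
    then show ?thesis
      using False by simp
  qed
  from has_contour_integral_eq[OF this on_circle] show ?thesis .
qed

lemma toeplitz_contour_integral:
  fixes z :: "nat \<Rightarrow> complex"
  assumes "G holomorphic_on ball 0 R" "R > 1"
  shows "((\<lambda>u. G u * of_real ((cmod (\<Sum>m\<le>N. z m * u ^ m))\<^sup>2) / u) has_contour_integral
          (2 * pi * \<i> * (\<Sum>n\<le>N. \<Sum>m\<le>n. (deriv ^^ (n - m)) G 0 / fact (n - m) * z m * cnj (z n))))
         (circlepath 0 1)"
proof -
  define c where "c n m = (if m \<le> n then (deriv ^^ (n - m)) G 0 / fact (n - m) else 0)" for n m
  have "((\<lambda>u. \<Sum>n\<le>N. \<Sum>m\<le>N. z m * cnj (z n) * (G u * u ^ m * cnj u ^ n / u)) has_contour_integral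
        (\<Sum>n\<le>N. \<Sum>m\<le>N. z m * cnj (z n) * (2 * pi * \<i> * c n m))) (circlepath 0 1)"
    unfolding c_def using assms
    by (intro has_contour_integral_sum has_contour_integral_lmul
        has_contour_integral_circlepath_Laurent_monomial) auto
  moreover have "(\<Sum>n\<le>N. \<Sum>m\<le>N. z m * cnj (z n) * (G u * u ^ m * cnj u ^ n / u))
      = G u * of_real ((cmod (\<Sum>m\<le>N. z m * u ^ m))\<^sup>2) / u" for u
  proof -
    have "(\<Sum>n\<le>N. \<Sum>m\<le>N. z m * cnj (z n) * (G u * u ^ m * cnj u ^ n / u))
        = G u / u * (cnj (\<Sum>m\<le>N. z m * u ^ m) * (\<Sum>m\<le>N. z m * u ^ m))"
      by (simp add: sum_product sum_distrib_left cnj_sum mult_ac)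
    also have "cnj (\<Sum>m\<le>N. z m * u ^ m) * (\<Sum>m\<le>N. z m * u ^ m)
        = of_real ((cmod (\<Sum>m\<le>N. z m * u ^ m))\<^sup>2)"
      by (metis complex_norm_square mult.commute)
    finally show ?thesis
      by simp
  qed
  moreover have "(\<Sum>m\<le>N. z m * cnj (z n) * (2 * pi * \<i> * c n m))
      = 2 * pi * \<i> * (\<Sum>m\<le>n. (deriv ^^ (n - m)) G 0 / fact (n - m) * z m * cnj (z n))"
    if "n \<le> N" for n
  proof -
    have "(\<Sum>m\<le>N. z m * cnj (z n) * (2 * pi * \<i> * c n m))
        = (\<Sum>m\<le>n. z m * cnj (z n) * (2 * pi * \<i> * c n m))"
      using that by (intro sum.mono_neutral_right) (auto simp: c_def)
    then show ?thesis
      by (simp add: c_def sum_distrib_left mult_ac)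
  qed
  ultimately show ?thesis
    by (simp add: sum_distrib_left)
qed

lemma toeplitz_form_nonneg:
  fixes A :: "nat \<Rightarrow> complex" and z :: "nat \<Rightarrow> complex"
  assumes "R > 1" and sums: "\<And>\<zeta>. cmod \<zeta> < R \<Longrightarrow> (\<lambda>k. A k * \<zeta> ^ k) sums G \<zeta>"
    and Re_G: "\<And>u. cmod u = 1 \<Longrightarrow> Re (G u) \<ge> 0"
  shows "Re (\<Sum>n\<le>N. \<Sum>m\<le>n. A (n - m) * z m * cnj (z n)) \<ge> 0"
proof (rule Re_circlepath_integral_nonneg)
  have "R > 0"
    using assms by simp
  from toeplitz_contour_integral[OF powser_sums_on_ball_Taylor(1)[OF this sums] \<open>R > 1\<close>]
  show "((\<lambda>u. G u * of_real ((cmod (\<Sum>m\<le>N. z m * u ^ m))\<^sup>2) / u) has_contour_integral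
      (2 * pi * \<i> * (\<Sum>n\<le>N. \<Sum>m\<le>n. A (n - m) * z m * cnj (z n)))) (circlepath 0 1)"
    by (simp add: powser_sums_on_ball_Taylor(2)[OF \<open>R > 0\<close> sums])
  show "Re (u * (G u * of_real ((cmod (\<Sum>m\<le>N. z m * u ^ m))\<^sup>2) / u)) \<ge> 0" if "cmod u = 1" for u
    using Re_G[OF that] that by auto
qed

text \<open>Taylor coefficients of \<open>\<zeta> \<mapsto> bdf2 (\<omega> \<zeta>) powr g - bdf2 x powr g\<close>.\<close>

definition weighted_lcoef :: "real \<Rightarrow> real \<Rightarrow> complex \<Rightarrow> nat \<Rightarrow> complex" where
  "weighted_lcoef g x \<omega> k =
     (if k = 0 then of_real (lcoef g 0 - bdf2 x powr g) else of_real (lcoef g k) * \<omega> ^ k)"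

lemma weighted_lcoef_toeplitz_nonneg_interior:
  assumes g: "0 \<le> g" "g \<le> 1" and \<omega>: "cmod \<omega> < 1" "cmod \<omega> \<le> x" "x \<le> 1"
  shows "Re (\<Sum>n\<le>N. \<Sum>m\<le>n. weighted_lcoef g x \<omega> (n - m) * z m * cnj (z n)) \<ge> 0"
proof (rule toeplitz_form_nonneg)
  define R where "R = 2 / (1 + cmod \<omega>)"
  have denom_pos: "1 + cmod \<omega> > 0"
    by (simp add: add_pos_nonneg)
  then show "R > 1"
    using \<omega> by (simp add: R_def less_divide_eq)
  show "(\<lambda>k. weighted_lcoef g x \<omega> k * \<zeta> ^ k) sums (bdf2 (\<omega> * \<zeta>) powr of_real g - of_real (bdf2 x powr g))"
    if "cmod \<zeta> < R" for \<zeta>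
  proof -
    have "cmod (\<omega> * \<zeta>) \<le> cmod \<omega> * R"
      using that by (simp add: norm_mult mult_left_mono)
    also have "\<dots> < 1"
      using \<omega> denom_pos by (simp add: R_def divide_less_eq)
    finally have "(\<lambda>k. of_real (lcoef g k) * (\<omega> * \<zeta>) ^ k - (if k = 0 then of_real (bdf2 x powr g) else 0))
        sums (bdf2 (\<omega> * \<zeta>) powr of_real g - of_real (bdf2 x powr g))"
      by (intro sums_diff lcoef_sums_bdf2_powr sums_single)
    moreover have "weighted_lcoef g x \<omega> k * \<zeta> ^ k
        = of_real (lcoef g k) * (\<omega> * \<zeta>) ^ k - (if k = 0 then of_real (bdf2 x powr g) else 0)" for k
      by (simp add: weighted_lcoef_def power_mult_distrib)
    ultimately show ?thesis
      by simp
  qed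
  show "Re (bdf2 (\<omega> * u) powr of_real g - of_real (bdf2 x powr g)) \<ge> 0" if "cmod u = 1" for u
  proof -
    have "cmod (\<omega> * u) = cmod \<omega>"
      using that by (simp add: norm_mult)
    then have "bdf2 x powr g \<le> bdf2 (cmod (\<omega> * u)) powr g"
      using \<omega> bdf2_pos[of x] by (intro powr_mono2 g bdf2_antimono) (auto simp: bdf2_def)
    also have "\<dots> \<le> Re (bdf2 (\<omega> * u) powr of_real g)"
      using g \<omega> \<open>cmod (\<omega> * u) = cmod \<omega>\<close> by (intro Re_bdf2_powr_ge) auto
    finally show ?thesis
      by simp
  qed
qed

lemma tendsto_weighted_lcoef_scaled:
  assumes "0 < g" "0 \<le> x" "x \<le> 1"
  shows "((\<lambda>r. weighted_lcoef g (r * x) (of_real r * \<omega>) k) \<longlongrightarrow> weighted_lcoef g x \<omega> k) (at_left 1)"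
proof (cases "k = 0")
  case True
  have "\<forall>\<^sub>F r in at_left (1::real). 0 < r \<and> r < 1"
    using eventually_at_left_real[of 0 1] by simp
  then have "\<forall>\<^sub>F r in at_left (1::real). 0 \<le> bdf2 (r * x)"
    by (rule eventually_mono) (use assms in \<open>auto intro!: bdf2_nonneg mult_le_one\<close>)
  moreover have "((\<lambda>r. bdf2 (r * x)) \<longlongrightarrow> bdf2 x) (at_left 1)"
    unfolding bdf2_def by (auto intro!: tendsto_eq_intros)
  ultimately have "((\<lambda>r. bdf2 (r * x) powr g) \<longlongrightarrow> bdf2 x powr g) (at_left 1)"
    using assms by (intro tendsto_powr') auto
  then show ?thesis
    using True by (auto simp: weighted_lcoef_def intro!: tendsto_intros)
next
  case False
  then show ?thesis
    by (auto simp: weighted_lcoef_def intro!: tendsto_eq_intros)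
qed

lemma weighted_lcoef_toeplitz_nonneg:
  assumes g: "0 < g" "g \<le> 1" and \<omega>: "cmod \<omega> \<le> x" "x \<le> 1"
  shows "Re (\<Sum>n\<le>N. \<Sum>m\<le>n. weighted_lcoef g x \<omega> (n - m) * z m * cnj (z n)) \<ge> 0"
proof -
  \<comment> \<open>\<open>\<omega>\<close> may lie on the unit circle: approximate \<open>(x, \<omega>)\<close> by \<open>(r x, r \<omega>)\<close> and let \<open>r \<rightarrow> 1\<^sup>-\<close>\<close>
  define P where "P r = Re (\<Sum>n\<le>N. \<Sum>m\<le>n. weighted_lcoef g (r * x) (of_real r * \<omega>) (n - m) * z m * cnj (z n))"
    for r
  have "0 \<le> x"
    using \<omega> norm_ge_zero[of \<omega>] by linarith
  have "\<forall>\<^sub>F r in at_left (1::real). 0 < r \<and> r < 1"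
    using eventually_at_left_real[of 0 1] by simp
  moreover have "P r \<ge> 0" if "0 < r" "r < 1" for r
  proof -
    have norm: "cmod (of_real r * \<omega>) = r * cmod \<omega>"
      using that by (simp add: norm_mult)
    have "r * cmod \<omega> \<le> r"
      using \<omega> that by (intro mult_left_le) auto
    then have "cmod (of_real r * \<omega>) < 1"
      using norm that by linarith
    moreover have "cmod (of_real r * \<omega>) \<le> r * x"
      using norm \<omega> that by (simp add: mult_left_mono)
    moreover have "r * x \<le> 1"
      using that \<omega> \<open>0 \<le> x\<close> by (simp add: mult_le_one)
    ultimately show ?thesis
      unfolding P_def using g by (intro weighted_lcoef_toeplitz_nonneg_interior) auto
  qed
  ultimately have "\<forall>\<^sub>F r in at_left (1::real). 0 \<le> P r"
    by (rule eventually_mono) auto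
  moreover have "((\<lambda>r. weighted_lcoef g (r * x) (of_real r * \<omega>) k) \<longlongrightarrow> weighted_lcoef g x \<omega> k) (at_left 1)"
    for k
    using g \<omega> \<open>0 \<le> x\<close> by (intro tendsto_weighted_lcoef_scaled) auto
  then have "(P \<longlongrightarrow> Re (\<Sum>n\<le>N. \<Sum>m\<le>n. weighted_lcoef g x \<omega> (n - m) * z m * cnj (z n))) (at_left 1)"
    unfolding P_def by (intro tendsto_intros)
  ultimately show ?thesis
    by (intro tendsto_lowerbound[of P]) auto
qed

lemma lk_2_exp_eq_weighted_lcoef:
  "of_real (lk_2 \<gamma> lam \<rho> \<tau> u k) * exp (- \<i> * of_real (\<eta> * u * real k * \<tau>))
   = weighted_lcoef \<gamma> (exp (- lam * \<tau>))
       (of_real (exp (- (lam + \<rho> * u) * \<tau>)) * exp (- \<i> * of_real (\<eta> * u * \<tau>))) k"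
proof (cases "k = 0")
  case True
  have "(\<Sum>l=1..(2::nat). 1 / real l * (1 - exp (- lam * \<tau>)) ^ l) = bdf2 (exp (- lam * \<tau>))"
    by (simp add: bdf2_def numeral_2_eq_2)
  then show ?thesis
    using True by (simp add: weighted_lcoef_def lk_2_def l0_2_def)
next
  case False
  have "exp (- (lam + \<rho> * u) * real k * \<tau>) = exp (- (lam + \<rho> * u) * \<tau>) ^ k"
    "exp (- \<i> * of_real (\<eta> * u * real k * \<tau>)) = exp (- \<i> * of_real (\<eta> * u * \<tau>)) ^ k"
    by (simp_all flip: exp_of_nat_mult add: mult_ac)
  then show ?thesis
    using False by (simp add: weighted_lcoef_def lk_2_def power_mult_distrib)
qed

lemma Re_lk_2_convolution_ge:
  fixes \<gamma> lam \<rho> \<eta> \<tau> u :: real and v :: "nat \<Rightarrow> complex"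
  assumes "0 < \<gamma>" "\<gamma> \<le> 1" "0 \<le> lam" "0 \<le> \<rho>" "0 \<le> \<tau>" "0 \<le> u"
  shows "Re (\<Sum>n=1..N. (\<Sum>k=0..n. of_real (lk_2 \<gamma> lam \<rho> \<tau> u k)
            * exp (- \<i> * of_real (\<eta> * u * real k * \<tau>)) * v (n - k)) * cnj (v n))
         \<ge> - l0_2 \<gamma> lam \<tau> * (cmod (v 0))\<^sup>2"
proof -
  define x where "x = exp (- lam * \<tau>)"
  define \<omega> where "\<omega> = of_real (exp (- (lam + \<rho> * u) * \<tau>)) * exp (- \<i> * of_real (\<eta> * u * \<tau>))"
  define a where "a k = of_real (lk_2 \<gamma> lam \<rho> \<tau> u k) * exp (- \<i> * of_real (\<eta> * u * real k * \<tau>))" for k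
  have "x \<le> 1"
    using assms by (simp add: x_def)
  have "cmod \<omega> = exp (- (lam + \<rho> * u) * \<tau>)"
    by (simp add: \<omega>_def norm_mult norm_exp_eq_Re)
  also have "\<dots> \<le> x"
    unfolding x_def using assms by (simp add: algebra_simps)
  finally have "cmod \<omega> \<le> x" .
  have a_eq: "a k = weighted_lcoef \<gamma> x \<omega> k" for k
    unfolding a_def x_def \<omega>_def by (rule lk_2_exp_eq_weighted_lcoef)
  have "(\<Sum>n\<le>N. \<Sum>m\<le>n. a (n - m) * v m * cnj (v n))
      = a 0 * v 0 * cnj (v 0) + (\<Sum>n=1..N. (\<Sum>k=0..n. a k * v (n - k)) * cnj (v n))"
  proof -
    have "(\<Sum>m\<le>n. a (n - m) * v m * cnj (v n)) = (\<Sum>k=0..n. a k * v (n - k)) * cnj (v n)" for n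
      by (subst sum.atLeastAtMost_rev[of _ 0 n, simplified])
         (simp add: atLeast0AtMost sum_distrib_right)
    then show ?thesis
      by (simp add: atLeast0AtMost[symmetric] sum.atLeast_Suc_atMost)
  qed
  moreover have "Re (a 0 * v 0 * cnj (v 0)) = l0_2 \<gamma> lam \<tau> * (cmod (v 0))\<^sup>2"
    by (simp add: a_def lk_2_def mult.assoc complex_norm_square[symmetric])
  moreover have "Re (\<Sum>n\<le>N. \<Sum>m\<le>n. a (n - m) * v m * cnj (v n)) \<ge> 0"
    unfolding a_eq using assms \<open>cmod \<omega> \<le> x\<close> \<open>x \<le> 1\<close> by (intro weighted_lcoef_toeplitz_nonneg) auto
  ultimately show ?thesis
    by (simp add: a_def)
qed

section \<open>The energy estimate\<close>

lemma Re_mult_cnj_le_Young: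
  fixes z w :: complex and \<mu> :: real
  assumes "\<mu> > 0"
  shows "Re (z * cnj w) \<le> \<mu> / 2 * (cmod w)^2 + (cmod z)^2 / (2 * \<mu>)"
proof -
  have "Re (z * cnj w) \<le> cmod z * cmod w"
    using complex_Re_le_cmod[of "z * cnj w"] by (simp add: norm_mult)
  also have "\<dots> \<le> \<mu> / 2 * (cmod w)^2 + (cmod z)^2 / (2 * \<mu>)"
  proof -
    have "0 \<le> (\<mu> * cmod w - cmod z)^2"
      by simp
    then show ?thesis
      using assms by (simp add: field_simps power2_eq_square)
  qed
  finally show ?thesis .
qed

lemma sum_Re_pairing_eq:
  fixes T W f v :: "nat \<Rightarrow> nat \<Rightarrow> complex" and t c :: real
  assumes "\<And>n i. n \<in> A \<Longrightarrow> i \<in> B \<Longrightarrow> f n i = (1 / complex_of_real t) * T n i - complex_of_real c * W n i"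
  shows "(\<Sum>n\<in>A. \<Sum>i\<in>B. Re (f n i * cnj (v n i)))
       = (\<Sum>i\<in>B. Re (\<Sum>n\<in>A. T n i * cnj (v n i))) / t - c * (\<Sum>n\<in>A. Re (\<Sum>i\<in>B. W n i * cnj (v n i)))"
proof -
  have "Re (f n i * cnj (v n i)) = Re (T n i * cnj (v n i)) / t - c * Re (W n i * cnj (v n i))"
    if "n \<in> A" "i \<in> B" for n i
    by (simp only: assms[OF that]) (simp add: algebra_simps)
  then have "(\<Sum>n\<in>A. \<Sum>i\<in>B. Re (f n i * cnj (v n i)))
      = (\<Sum>n\<in>A. \<Sum>i\<in>B. Re (T n i * cnj (v n i)) / t - c * Re (W n i * cnj (v n i)))"
    by (intro sum.cong refl) auto
  also have "\<dots> = (\<Sum>n\<in>A. \<Sum>i\<in>B. Re (T n i * cnj (v n i))) / t - c * (\<Sum>n\<in>A. Re (\<Sum>i\<in>B. W n i * cnj (v n i)))"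
    by (simp add: sum_subtractf sum_divide_distrib sum_distrib_left Re_sum)
  also have "(\<Sum>n\<in>A. \<Sum>i\<in>B. Re (T n i * cnj (v n i))) = (\<Sum>i\<in>B. Re (\<Sum>n\<in>A. T n i * cnj (v n i)))"
    unfolding Re_sum by (rule sum.swap)
  finally show ?thesis .
qed

lemma scheme_energy_lower:
  fixes \<gamma> \<alpha> lam \<rho> \<eta> \<tau> c :: real and u :: "nat \<Rightarrow> real" and v f :: "nat \<Rightarrow> nat \<Rightarrow> complex"
  assumes "0 < \<gamma>" "\<gamma> \<le> 1" "1 < \<alpha>" "\<alpha> < 2" "0 \<le> lam" "0 \<le> \<rho>" "0 < \<tau>" "0 \<le> c" "2 \<le> M"
    and u: "\<And>i. 1 \<le> i \<Longrightarrow> i \<le> M - 1 \<Longrightarrow> 0 \<le> u i"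
    and eq: "\<forall>i n. 1 \<le> i \<and> i \<le> M - 1 \<and> 1 \<le> n \<and> n \<le> N \<longrightarrow>
       (1 / complex_of_real (\<tau> powr \<gamma>)) *
         (\<Sum>k=0..n. complex_of_real (lk_2 \<gamma> lam \<rho> \<tau> (u i) k)
            * exp (- \<i> * complex_of_real (\<eta> * u i * real k * \<tau>)) * v (n - k) i)
       - complex_of_real c * (\<Sum>j=0..M. complex_of_real (wmat \<alpha> i j) * v n j)
       = f n i"
    and bc: "\<forall>n\<le>N. v n 0 = 0 \<and> v n M = 0"
  shows "c * (2 * real M powr (- \<alpha>) / \<bar>Gamma (1 - \<alpha>)\<bar>) * (\<Sum>n=1..N. \<Sum>i=1..M-1. (cmod (v n i))\<^sup>2)
           - l0_2 \<gamma> lam \<tau> / \<tau> powr \<gamma> * (\<Sum>i=1..M-1. (cmod (v 0 i))\<^sup>2)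
         \<le> (\<Sum>n=1..N. \<Sum>i=1..M-1. Re (f n i * cnj (v n i)))"
proof -
  define T where "T n i = (\<Sum>k=0..n. complex_of_real (lk_2 \<gamma> lam \<rho> \<tau> (u i) k)
            * exp (- \<i> * complex_of_real (\<eta> * u i * real k * \<tau>)) * v (n - k) i)" for n i
  define W where "W n i = (\<Sum>j=0..M. complex_of_real (wmat \<alpha> i j) * v n j)" for n i
  have X_eq: "(\<Sum>n=1..N. \<Sum>i=1..M-1. Re (f n i * cnj (v n i)))
      = (\<Sum>i=1..M-1. Re (\<Sum>n=1..N. T n i * cnj (v n i))) / \<tau> powr \<gamma>
        - c * (\<Sum>n=1..N. Re (\<Sum>i=1..M-1. W n i * cnj (v n i)))"
    using eq unfolding T_def W_def by (intro sum_Re_pairing_eq) auto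
  have "(\<Sum>i=1..M-1. Re (\<Sum>n=1..N. T n i * cnj (v n i))) / \<tau> powr \<gamma>
        - c * (\<Sum>n=1..N. Re (\<Sum>i=1..M-1. W n i * cnj (v n i)))
      \<ge> (\<Sum>i=1..M-1. - l0_2 \<gamma> lam \<tau> * (cmod (v 0 i))\<^sup>2) / \<tau> powr \<gamma>
        - c * (\<Sum>n=1..N. - (2 * real M powr (- \<alpha>) / \<bar>Gamma (1 - \<alpha>)\<bar>) * (\<Sum>i=1..M-1. (cmod (v n i))\<^sup>2))"
  proof (intro diff_mono divide_right_mono mult_left_mono sum_mono)
    show "- l0_2 \<gamma> lam \<tau> * (cmod (v 0 i))\<^sup>2 \<le> Re (\<Sum>n=1..N. T n i * cnj (v n i))"
      if "i \<in> {1..M-1}" for i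
      unfolding T_def using assms u[of i] that by (intro Re_lk_2_convolution_ge) auto
    show "Re (\<Sum>i=1..M-1. W n i * cnj (v n i))
        \<le> - (2 * real M powr (- \<alpha>) / \<bar>Gamma (1 - \<alpha>)\<bar>) * (\<Sum>i=1..M-1. (cmod (v n i))\<^sup>2)"
      if "n \<in> {1..N}" for n
      unfolding W_def using assms bc that by (intro Re_wmat_form_le) auto
  qed (use assms in auto)
  then show ?thesis
    unfolding X_eq by (simp add: sum_distrib_left sum_negf sum_divide_distrib algebra_simps)
qed

lemma energy_bound:
  fixes \<mu> a X SV S0 SF :: real
  assumes "\<mu> > 0" and lower: "\<mu> * SV - a * S0 \<le> X" and upper: "X \<le> \<mu> / 2 * SV + SF / (2 * \<mu>)"
  shows "SV \<le> 2 * a / \<mu> * S0 + SF / \<mu>\<^sup>2"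
proof -
  have "\<mu> * (2 * (\<mu> * SV - a * S0)) \<le> \<mu> * (2 * X)"
    using lower \<open>\<mu> > 0\<close> by simp
  moreover have "\<mu> * (2 * X) \<le> \<mu> * (2 * (\<mu> / 2 * SV + SF / (2 * \<mu>)))"
    using upper \<open>\<mu> > 0\<close> by simp
  ultimately have "\<mu>\<^sup>2 * SV \<le> 2 * a * \<mu> * S0 + SF"
    using \<open>\<mu> > 0\<close> by (simp add: algebra_simps power2_eq_square)
  then have "SV \<le> (2 * a * \<mu> * S0 + SF) / \<mu>\<^sup>2"
    using \<open>\<mu> > 0\<close> by (simp add: le_divide_eq mult.commute)
  also have "\<dots> = 2 * a / \<mu> * S0 + SF / \<mu>\<^sup>2"
    using \<open>\<mu> > 0\<close> by (simp add: field_simps power2_eq_square)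
  finally show ?thesis .
qed

lemma scheme_l2_estimate:
  fixes \<gamma> \<alpha> lam \<rho> \<eta> \<tau> c h :: real and u :: "nat \<Rightarrow> real" and v f :: "nat \<Rightarrow> nat \<Rightarrow> complex"
  assumes "0 < \<gamma>" "\<gamma> \<le> 1" "1 < \<alpha>" "\<alpha> < 2" "0 \<le> lam" "0 \<le> \<rho>" "0 < \<tau>" "0 < c" "0 \<le> h" "2 \<le> M"
    and "\<And>i. 1 \<le> i \<Longrightarrow> i \<le> M - 1 \<Longrightarrow> 0 \<le> u i"
    and "\<forall>i n. 1 \<le> i \<and> i \<le> M - 1 \<and> 1 \<le> n \<and> n \<le> N \<longrightarrow>
       (1 / complex_of_real (\<tau> powr \<gamma>)) *
         (\<Sum>k=0..n. complex_of_real (lk_2 \<gamma> lam \<rho> \<tau> (u i) k)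
            * exp (- \<i> * complex_of_real (\<eta> * u i * real k * \<tau>)) * v (n - k) i)
       - complex_of_real c * (\<Sum>j=0..M. complex_of_real (wmat \<alpha> i j) * v n j)
       = f n i"
    and "\<forall>n\<le>N. v n 0 = 0 \<and> v n M = 0"
  defines "\<mu> \<equiv> c * (2 * real M powr (- \<alpha>) / \<bar>Gamma (1 - \<alpha>)\<bar>)"
  shows "(\<Sum>n=1..N. gnorm2 h M (v n))
         \<le> 2 * (l0_2 \<gamma> lam \<tau> / \<tau> powr \<gamma>) / \<mu> * gnorm2 h M (v 0)
           + (\<Sum>n=1..N. gnorm2 h M (f n)) / \<mu>\<^sup>2"
proof -
  define SV SF where "SV = (\<Sum>n=1..N. \<Sum>i=1..M-1. (cmod (v n i))\<^sup>2)"
    and "SF = (\<Sum>n=1..N. \<Sum>i=1..M-1. (cmod (f n i))\<^sup>2)"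
  have "Gamma (1 - \<alpha>) \<noteq> 0"
    using assms Gamma_neg_of_gt_minus_one[of "1 - \<alpha>"] by auto
  then have "\<mu> > 0"
    using assms by (simp add: \<mu>_def)
  have "(\<Sum>n=1..N. \<Sum>i=1..M-1. Re (f n i * cnj (v n i)))
      \<le> (\<Sum>n=1..N. \<Sum>i=1..M-1. \<mu> / 2 * (cmod (v n i))\<^sup>2 + (cmod (f n i))\<^sup>2 / (2 * \<mu>))"
    using \<open>\<mu> > 0\<close> by (intro sum_mono Re_mult_cnj_le_Young)
  also have "\<dots> = \<mu> / 2 * SV + SF / (2 * \<mu>)"
    by (simp add: SV_def SF_def sum.distrib sum_distrib_left sum_divide_distrib)
  finally have "SV \<le> 2 * (l0_2 \<gamma> lam \<tau> / \<tau> powr \<gamma>) / \<mu> * (\<Sum>i=1..M-1. (cmod (v 0 i))\<^sup>2) + SF / \<mu>\<^sup>2"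
    using scheme_energy_lower[OF assms(1-7) less_imp_le[OF assms(8)] assms(10-13)] \<open>\<mu> > 0\<close>
    by (intro energy_bound) (auto simp: SV_def \<mu>_def)
  then have "h * SV \<le> h * (2 * (l0_2 \<gamma> lam \<tau> / \<tau> powr \<gamma>) / \<mu> * (\<Sum>i=1..M-1. (cmod (v 0 i))\<^sup>2) + SF / \<mu>\<^sup>2)"
    using assms by (intro mult_left_mono) auto
  then show ?thesis
    by (simp add: gnorm2_def SV_def SF_def sum_distrib_left algebra_simps)
qed

lemma kappa_pos:
  assumes "1 < \<alpha>" "\<alpha> < 2" "0 < K"
  shows "kappa K \<alpha> > 0"
proof -
  have "cos (pi - \<alpha> * pi / 2) > 0"
    using assms by (intro cos_gt_zero_pi) (auto simp: field_simps)
  then have "cos (\<alpha> * pi / 2) < 0"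
    by simp
  then show ?thesis
    using assms by (simp add: kappa_def kappa_alpha_def divide_pos_neg)
qed

lemma scheme_stability:
  fixes \<gamma> \<alpha> lam \<rho> \<eta> \<tau> \<kappa> b :: real and u :: "nat \<Rightarrow> real" and v f :: "nat \<Rightarrow> nat \<Rightarrow> complex"
  assumes "0 < \<gamma>" "\<gamma> \<le> 1" "1 < \<alpha>" "\<alpha> < 2" "0 \<le> lam" "0 \<le> \<rho>" "0 < \<tau>" "0 < \<kappa>" "0 < b" "2 \<le> M"
    and "\<And>i. 1 \<le> i \<Longrightarrow> i \<le> M - 1 \<Longrightarrow> 0 \<le> u i"
    and "\<forall>i n. 1 \<le> i \<and> i \<le> M - 1 \<and> 1 \<le> n \<and> n \<le> N \<longrightarrow>
       (1 / complex_of_real (\<tau> powr \<gamma>)) *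
         (\<Sum>k=0..n. complex_of_real (lk_2 \<gamma> lam \<rho> \<tau> (u i) k)
            * exp (- \<i> * complex_of_real (\<eta> * u i * real k * \<tau>)) * v (n - k) i)
       - complex_of_real (\<kappa> / (b / real M) powr \<alpha>) * (\<Sum>j=0..M. complex_of_real (wmat \<alpha> i j) * v n j)
       = f n i"
    and "\<forall>n\<le>N. v n 0 = 0 \<and> v n M = 0"
  shows "\<tau> * (\<Sum>n=1..N. gnorm2 (b / real M) M (v n))
     \<le> \<tau> powr (1 - \<gamma>) * l0_2 \<gamma> lam \<tau> * b powr \<alpha> * \<bar>Gamma (1 - \<alpha>)\<bar> / \<kappa>
          * gnorm2 (b / real M) M (v 0)
       + b powr (2 * \<alpha>) * (Gamma (1 - \<alpha>))^2 / (4 * \<kappa>^2)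
          * \<tau> * (\<Sum>n=1..N. gnorm2 (b / real M) M (f n))"
proof -
  define h where "h = b / real M"
  define \<mu> where "\<mu> = 2 * \<kappa> / (b powr \<alpha> * \<bar>Gamma (1 - \<alpha>)\<bar>)"
  have "h powr \<alpha> * real M powr \<alpha> = b powr \<alpha>"
    using assms by (simp add: h_def flip: powr_mult)
  then have "\<kappa> / h powr \<alpha> * (2 * real M powr (- \<alpha>) / \<bar>Gamma (1 - \<alpha>)\<bar>) = \<mu>"
    using assms by (simp add: \<mu>_def powr_minus field_simps)
  then have "(\<Sum>n=1..N. gnorm2 h M (v n))
      \<le> 2 * (l0_2 \<gamma> lam \<tau> / \<tau> powr \<gamma>) / \<mu> * gnorm2 h M (v 0) + (\<Sum>n=1..N. gnorm2 h M (f n)) / \<mu>\<^sup>2"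
    using scheme_l2_estimate[of \<gamma> \<alpha> lam \<rho> \<tau> "\<kappa> / h powr \<alpha>" h M u N \<eta> v f] assms
    by (simp add: h_def)
  then have "\<tau> * (\<Sum>n=1..N. gnorm2 h M (v n))
      \<le> \<tau> * (2 * (l0_2 \<gamma> lam \<tau> / \<tau> powr \<gamma>) / \<mu> * gnorm2 h M (v 0) + (\<Sum>n=1..N. gnorm2 h M (f n)) / \<mu>\<^sup>2)"
    using assms by (intro mult_left_mono) auto
  also have "\<dots> = \<tau> / \<tau> powr \<gamma> * l0_2 \<gamma> lam \<tau> * (2 / \<mu>) * gnorm2 h M (v 0)
      + 1 / \<mu>\<^sup>2 * \<tau> * (\<Sum>n=1..N. gnorm2 h M (f n))"
    by (simp add: divide_inverse algebra_simps)
  also have "2 / \<mu> = b powr \<alpha> * \<bar>Gamma (1 - \<alpha>)\<bar> / \<kappa>"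
    using assms by (simp add: \<mu>_def)
  also have "1 / \<mu>\<^sup>2 = b powr (2 * \<alpha>) * (Gamma (1 - \<alpha>))\<^sup>2 / (4 * \<kappa>\<^sup>2)"
    using assms by (simp add: \<mu>_def power2_eq_square powr_add[symmetric] field_simps)
  also have "\<tau> / \<tau> powr \<gamma> = \<tau> powr (1 - \<gamma>)"
    using assms by (simp add: powr_diff)
  finally show ?thesis
    by (simp add: h_def mult_ac)
qed

theorem lemma3p8:
  fixes \<gamma> \<alpha> lam \<rho> \<eta> K b T \<tau> :: real
    and U :: "real \<Rightarrow> real"
    and M N :: nat
    and v f :: "nat \<Rightarrow> nat \<Rightarrow> complex"
    and \<phi> :: "nat \<Rightarrow> complex"
  assumes "0 < \<gamma>" "\<gamma> < 1" "1 < \<alpha>" "\<alpha> < 2" "0 \<le> lam" "0 < \<rho>"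
    and "0 < K" "0 < b" "0 < T"
    and "\<forall>x\<in>{0..b}. 0 \<le> U x"
    and "2 \<le> M" "1 \<le> N"
    and "0 < \<tau>" "real N * \<tau> \<le> T"
    and eq: "\<forall>i n. 1 \<le> i \<and> i \<le> M - 1 \<and> 1 \<le> n \<and> n \<le> N \<longrightarrow>
       (1 / complex_of_real (\<tau> powr \<gamma>)) *
         (\<Sum>k=0..n. complex_of_real (lk_2 \<gamma> lam \<rho> \<tau> (U (real i * (b / real M))) k)
            * exp (- \<i> * complex_of_real (\<eta> * U (real i * (b / real M)) * real k * \<tau>))
            * v (n - k) i)
       - complex_of_real (kappa K \<alpha> / (b / real M) powr \<alpha>) *
         (\<Sum>j=0..M. complex_of_real (wmat \<alpha> i j) * v n j)
       = f n i"
    and init: "\<forall>i. 1 \<le> i \<and> i \<le> M - 1 \<longrightarrow> v 0 i = \<phi> i"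
    and bc: "\<forall>n\<le>N. v n 0 = 0 \<and> v n M = 0"
  shows "\<tau> * (\<Sum>n=1..N. gnorm2 (b / real M) M (v n))
     \<le> \<tau> powr (1 - \<gamma>) * l0_2 \<gamma> lam \<tau> * b powr \<alpha> * \<bar>Gamma (1 - \<alpha>)\<bar> / kappa K \<alpha>
          * gnorm2 (b / real M) M (v 0)
       + b powr (2 * \<alpha>) * (Gamma (1 - \<alpha>))^2 / (4 * (kappa K \<alpha>)^2)
          * \<tau> * (\<Sum>n=1..N. gnorm2 (b / real M) M (f n))"
proof (rule scheme_stability[OF _ _ _ _ _ _ _ kappa_pos _ _ _ eq bc])
  show "0 \<le> U (real i * (b / real M))" if "1 \<le> i" "i \<le> M - 1" for i
  proof -
    have "real i * (b / real M) \<le> real M * (b / real M)"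
      using that assms by (intro mult_right_mono) auto
    then show ?thesis
      using assms by simp
  qed
qed (use assms in auto)

end
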